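(* Let $n\ge 3$ and $1\le k<\frac{n}{2}$ be integers. The co-spectrum of the generalized Petersen graph $P(n,k)$ is exactly $\{3,4,5,\dots,n+2\}$; that is, for every integer $s$ with $3\le s\le n+2$, $P(n,k)$ has a bond of size exactly $s$, and every bond of $P(n,k)$ has size in $\{3,\dots,n+2\}$.
   Context: The generalized Petersen graph $P(n,k)$, for $n\ge 3$ and $1\le k<\frac n2$, has vertex set $\{x_1,\dots,x_n,y_1,\dots,y_n\}$ and edge set $\{x_ix_{i+1},\ x_iy_i,\ y_iy_{i+k} : i=1,\dots,n\}$, with subscripts read modulo $n$. A bond of a graph is a minimal nonempty edge-cut; equivalently, for a connected graph $G$, it is the set of edges $[X,Y]$ between the parts of a partition $V(G)=X\cup Y$ ($X,Y$ nonempty) such that $G[X]$ and $G[Y]$ are both connected. The co-spectrum of a graph is the set of all sizes of its bonds. *)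

theory Defs
  imports Main
begin

text \<open>Vertices of the generalized Petersen graph: (False, i) is x_(i+1), (True, i) is y_(i+1),
  for i in {0..<n} (0-based indices, subscripts modulo n).\<close>

definition gp_vertices :: "nat \<Rightarrow> (bool \<times> nat) set" where
  "gp_vertices n = UNIV \<times> {0..<n}"

definition gp_edges :: "nat \<Rightarrow> nat \<Rightarrow> (bool \<times> nat) set set" where
  "gp_edges n k =
     (\<Union>i\<in>{0..<n}. {{(False, i), (False, (i + 1) mod n)},
                   {(False, i), (True, i)},
                   {(True, i), (True, (i + k) mod n)}})"

definition induced_connected :: "'a set set \<Rightarrow> 'a set \<Rightarrow> bool" where
  "induced_connected E X \<longleftrightarrow> X \<noteq> {} \<and>
     (\<forall>u\<in>X. \<forall>v\<in>X. (u, v) \<in> {(a, b). {a, b} \<in> E \<and> a \<in> X \<and> b \<in> X}\<^sup>*)"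

definition edge_cut :: "'a set set \<Rightarrow> 'a set \<Rightarrow> 'a set \<Rightarrow> 'a set set" where
  "edge_cut E X Y = {e \<in> E. \<exists>a\<in>X. \<exists>b\<in>Y. e = {a, b}}"

definition is_bond :: "'a set \<Rightarrow> 'a set set \<Rightarrow> 'a set set \<Rightarrow> bool" where
  "is_bond V E B \<longleftrightarrow> (\<exists>X Y. X \<noteq> {} \<and> Y \<noteq> {} \<and> X \<union> Y = V \<and> X \<inter> Y = {} \<and>
      induced_connected E X \<and> induced_connected E Y \<and> B = edge_cut E X Y)"

definition co_spectrum :: "'a set \<Rightarrow> 'a set set \<Rightarrow> nat set" where
  "co_spectrum V E = {card B | B. is_bond V E B}"

end

theory Submission
  imports Defs
begin

text \<open>Every bond of P(n,k) has at least three edges: if one side contains the whole outer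
  cycle, an inner vertex on the other side meets three cut edges; otherwise the outer cycle is
  cut at least twice and a local argument around the first cut produces a third cut edge.
  Conversely the two sides X, Y of a bond induce connected subgraphs, with at least
  card X - 1 and card Y - 1 edges, so at most 3n - (2n - 2) = n + 2 of the 3n edges are cut.
  Every size in between is attained by the bond whose one side consists of the outer vertices
  x_1, ..., x_m and the inner vertices y_1, ..., y_j, where 1 \<le> m \<le> n - k and j \<le> min m k:
  it has m + j + 2 edges.\<close>

definition induced_adj :: "'a set set \<Rightarrow> 'a set \<Rightarrow> ('a \<times> 'a) set" where
  "induced_adj E X = {(a, b). {a, b} \<in> E \<and> a \<in> X \<and> b \<in> X}"

lemma induced_adjI: "{a, b} \<in> E \<Longrightarrow> a \<in> X \<Longrightarrow> b \<in> X \<Longrightarrow> (a, b) \<in> induced_adj E X"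
  by (simp add: induced_adj_def)

lemma sym_induced_adj: "sym (induced_adj E X)"
  by (auto simp: induced_adj_def insert_commute intro: symI)

lemma induced_connected_iff:
  "induced_connected E X \<longleftrightarrow> X \<noteq> {} \<and> (\<forall>u\<in>X. \<forall>v\<in>X. (u, v) \<in> (induced_adj E X)\<^sup>*)"
  by (simp add: induced_connected_def induced_adj_def)

lemma induced_connectedI:
  assumes "r \<in> X" and "\<And>u. u \<in> X \<Longrightarrow> (r, u) \<in> (induced_adj E X)\<^sup>*"
  shows "induced_connected E X"
proof -
  have "(u, v) \<in> (induced_adj E X)\<^sup>*" if "u \<in> X" "v \<in> X" for u v
  proof -
    have "(u, r) \<in> (induced_adj E X)\<^sup>*"
      using assms(2)[OF \<open>u \<in> X\<close>] sym_induced_adj by (metis rtrancl_converseD sym_conv_converse_eq)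
    then show ?thesis using assms(2)[OF \<open>v \<in> X\<close>] by (rule rtrancl_trans)
  qed
  then show ?thesis using assms(1) unfolding induced_connected_iff by blast
qed

lemma chain_in_rtrancl:
  assumes "\<And>l. a \<le> l \<Longrightarrow> l < b \<Longrightarrow> (f l, f (Suc l)) \<in> R" and "a \<le> l" "l \<le> b"
  shows "(f a, f l) \<in> R\<^sup>*"
  using assms(2,3)
proof (induction l rule: dec_induct)
  case (step l)
  then have "(f a, f l) \<in> R\<^sup>*" "(f l, f (Suc l)) \<in> R" using assms(1) by simp_all
  then show ?case by (rule rtrancl_into_rtrancl)
qed simp

text \<open>A spanning tree argument: orienting every vertex other than a root r towards r along a
  shortest walk gives an injection from X - {r} into the edges inside X.\<close>

lemma induced_connected_card_le:
  assumes "finite E" "finite X" and conn: "induced_connected E X"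
  shows "card X \<le> card {e \<in> E. e \<subseteq> X} + 1"
proof -
  let ?R = "induced_adj E X"
  from conn obtain r where r: "r \<in> X" unfolding induced_connected_def by auto
  have reachable: "\<exists>m. (v, r) \<in> ?R ^^ m" if "v \<in> X" for v
    using conn r that unfolding induced_connected_iff by (meson rtrancl_imp_relpow)
  define d where "d v = (LEAST m. (v, r) \<in> ?R ^^ m)" for v
  have d: "(v, r) \<in> ?R ^^ d v" if "v \<in> X" for v
    unfolding d_def using reachable[OF that] by (rule LeastI_ex)
  have d_min: "d v \<le> m" if "(v, r) \<in> ?R ^^ m" for v m
    unfolding d_def using that by (rule Least_le)
  have d_pos: "0 < d v" if "v \<in> X - {r}" for v
    using d[of v] that by (cases "d v") auto
  have "\<exists>w. (v, w) \<in> ?R \<and> (w, r) \<in> ?R ^^ (d v - 1)" if "v \<in> X - {r}" for v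
    using d[of v] d_pos[OF that] that by (metis Suc_pred' DiffD1 relpow_Suc_D2)
  then obtain next_vertex where next_vertex: "\<And>v. v \<in> X - {r} \<Longrightarrow>
      (v, next_vertex v) \<in> ?R \<and> (next_vertex v, r) \<in> ?R ^^ (d v - 1)"
    by metis
  have closer: "d (next_vertex v) < d v" if "v \<in> X - {r}" for v
    using d_min next_vertex[OF that] d_pos[OF that] by (meson diff_less le_less_trans zero_less_one)
  have "inj_on (\<lambda>v. {v, next_vertex v}) (X - {r})"
  proof (rule inj_onI)
    fix u v assume u: "u \<in> X - {r}" and v: "v \<in> X - {r}" and eq: "{u, next_vertex u} = {v, next_vertex v}"
    show "u = v"
    proof (rule ccontr)
      assume "u \<noteq> v"
      with eq have "u = next_vertex v" "v = next_vertex u" by (auto simp: doubleton_eq_iff)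
      then show False using closer[OF u] closer[OF v] by simp
    qed
  qed
  moreover have "(\<lambda>v. {v, next_vertex v}) ` (X - {r}) \<subseteq> {e \<in> E. e \<subseteq> X}"
    using next_vertex by (auto simp: induced_adj_def)
  ultimately have "card (X - {r}) \<le> card {e \<in> E. e \<subseteq> X}"
    using card_inj_on_le assms(1) by fastforce
  then show ?thesis using assms(2) r by (simp add: card_Diff_singleton)
qed

lemma edge_cut_commute: "edge_cut E X Y = edge_cut E Y X"
  unfolding edge_cut_def by (auto simp: insert_commute)

lemma edge_cut_doubleton_iff:
  assumes "{a, b} \<in> E" "a \<in> X \<union> Y" "b \<in> X \<union> Y" "X \<inter> Y = {}"
  shows "{a, b} \<in> edge_cut E X Y \<longleftrightarrow> (a \<in> X \<longleftrightarrow> b \<notin> X)"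
  unfolding edge_cut_def using assms by (auto simp: doubleton_eq_iff)

lemma card_edge_cut_le:
  assumes "finite E" "{} \<notin> E" "finite X" "finite Y" "X \<inter> Y = {}"
    and "induced_connected E X" "induced_connected E Y"
  shows "card (edge_cut E X Y) + card X + card Y \<le> card E + 2"
proof -
  let ?B = "edge_cut E X Y" and ?EX = "{e \<in> E. e \<subseteq> X}" and ?EY = "{e \<in> E. e \<subseteq> Y}"
  have "e = {}" if "e \<subseteq> X" "e \<subseteq> Y" for e
    using that assms(5) by blast
  then have disjoint: "?B \<inter> ?EX = {}" "?B \<inter> ?EY = {}" "?EX \<inter> ?EY = {}"
    using assms(2,5) unfolding edge_cut_def by auto
  have finite: "finite ?B" "finite ?EX" "finite ?EY"
    using assms(1) unfolding edge_cut_def by auto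
  have "card ?B + card ?EX + card ?EY = card (?B \<union> ?EX \<union> ?EY)"
    using finite disjoint by (simp add: card_Un_disjoint Int_Un_distrib2)
  also have "\<dots> \<le> card E"
    using assms(1) by (intro card_mono) (auto simp: edge_cut_def)
  finally show ?thesis
    using induced_connected_card_le[OF assms(1,3,6)] induced_connected_card_le[OF assms(1,4,7)]
    by linarith
qed

lemma mod_add_ne_self:
  fixes i k n :: nat
  assumes "0 < k" "k < n" "i < n"
  shows "(i + k) mod n \<noteq> i"
  using assms by (cases "i + k < n") (auto simp: le_mod_geq)

lemma mod_add_mod_add_ne_self:
  fixes i k n :: nat
  assumes "0 < k" "2 * k < n" "i < n"
  shows "((i + k) mod n + k) mod n \<noteq> i"
proof -
  have "((i + k) mod n + k) mod n = (i + 2 * k) mod n"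
    by (simp add: mod_add_left_eq add.assoc mult_2)
  then show ?thesis using mod_add_ne_self[of "2 * k" n i] assms by simp
qed

lemma mod_add_diff_add_cancel:
  fixes j k n :: nat
  assumes "k \<le> n" "j < n"
  shows "((j + (n - k)) mod n + k) mod n = j"
proof -
  have "((j + (n - k)) mod n + k) mod n = (j + n) mod n"
    using assms(1) by (simp add: mod_add_left_eq)
  then show ?thesis using assms(2) by simp
qed

lemma cyclic_change_point:
  fixes a b n :: nat
  assumes "P a" "\<not> P b" "a < n" "b < n"
  obtains i where "i < n" "P i" "\<not> P ((i + 1) mod n)"
proof -
  have "\<exists>i<n. P i \<and> \<not> P ((i + 1) mod n)"
  proof (rule ccontr)
    assume no_change: "\<not> ?thesis"
    have "P ((a + m) mod n)" for m
    proof (induction m)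
      case (Suc m)
      then have "P (((a + m) mod n + 1) mod n)" using no_change assms(3) by auto
      then show ?case by (simp add: mod_Suc_eq)
    qed (use assms in simp)
    moreover have "(a + (b + n - a)) mod n = b" using assms(3,4) by simp
    ultimately show False using assms(2) by metis
  qed
  then show ?thesis using that by blast
qed

datatype gp_edge_kind = Outer | Spoke | Inner

definition gp_edge :: "nat \<Rightarrow> nat \<Rightarrow> gp_edge_kind \<times> nat \<Rightarrow> (bool \<times> nat) set" where
  "gp_edge n k = (\<lambda>(c, i). case c of
      Outer \<Rightarrow> {(False, i), (False, (i + 1) mod n)}
    | Spoke \<Rightarrow> {(False, i), (True, i)}
    | Inner \<Rightarrow> {(True, i), (True, (i + k) mod n)})"

lemma gp_edge_simps:
  "gp_edge n k (Outer, i) = {(False, i), (False, (i + 1) mod n)}"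
  "gp_edge n k (Spoke, i) = {(False, i), (True, i)}"
  "gp_edge n k (Inner, i) = {(True, i), (True, (i + k) mod n)}"
  by (simp_all add: gp_edge_def)

lemma UNIV_gp_edge_kind: "(UNIV :: gp_edge_kind set) = {Outer, Spoke, Inner}"
  using gp_edge_kind.exhaust by auto

lemma gp_edges_eq_image: "gp_edges n k = gp_edge n k ` (UNIV \<times> {0..<n})"
proof -
  have "gp_edge n k ` (UNIV \<times> {0..<n}) =
      (\<Union>i\<in>{0..<n}. {gp_edge n k (Outer, i), gp_edge n k (Spoke, i), gp_edge n k (Inner, i)})"
    unfolding UNIV_gp_edge_kind by blast
  then show ?thesis by (simp only: gp_edges_def gp_edge_simps)
qed

lemma gp_edge_in_gp_edges: "i < n \<Longrightarrow> gp_edge n k (c, i) \<in> gp_edges n k"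
  by (simp add: gp_edges_eq_image)

lemma finite_gp_edges: "finite (gp_edges n k)"
  by (simp add: gp_edges_def)

lemma card_gp_edges_le: "card (gp_edges n k) \<le> 3 * n"
proof -
  have "card (gp_edges n k) \<le> card ((UNIV :: gp_edge_kind set) \<times> {0..<n})"
    unfolding gp_edges_eq_image by (rule card_image_le) (simp add: UNIV_gp_edge_kind)
  then show ?thesis by (simp add: card_cartesian_product UNIV_gp_edge_kind)
qed

lemma empty_notin_gp_edges: "{} \<notin> gp_edges n k"
  by (auto simp: gp_edges_def)

lemma gp_edges_subset_vertices: "e \<in> gp_edges n k \<Longrightarrow> e \<subseteq> gp_vertices n"
  by (auto simp: gp_edges_def gp_vertices_def)

lemma finite_gp_vertices: "finite (gp_vertices n)"
  by (simp add: gp_vertices_def)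

lemma card_gp_vertices: "card (gp_vertices n) = 2 * n"
  by (simp add: gp_vertices_def card_cartesian_product)

lemma inj_on_gp_edge:
  assumes "0 < k" "2 * k < n"
  shows "inj_on (gp_edge n k) (UNIV \<times> {0..<n})"
proof (rule inj_onI)
  fix p q assume "p \<in> UNIV \<times> {0..<n}" "q \<in> UNIV \<times> {0..<n}"
    and eq: "gp_edge n k p = gp_edge n k q"
  then obtain c i d j where pq: "p = (c, i)" "q = (d, j)" and "i < n" by auto
  have rotation_not_swap: "\<not> (i = (j + r) mod n \<and> j = (i + r) mod n)" if "0 < r" "2 * r < n" for r
    using mod_add_mod_add_ne_self[OF that \<open>i < n\<close>] by auto
  have "c = d \<and> i = j"
  proof (cases c; cases d)
    assume "c = Outer" "d = Outer"
    then show ?thesis using eq rotation_not_swap[of 1] assms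
      by (auto simp: pq gp_edge_simps doubleton_eq_iff)
  next
    assume "c = Inner" "d = Inner"
    then show ?thesis using eq rotation_not_swap[of k] assms
      by (auto simp: pq gp_edge_simps doubleton_eq_iff)
  qed (use eq in \<open>auto simp: pq gp_edge_simps doubleton_eq_iff\<close>)
  then show "p = q" using pq by simp
qed

lemma gp_edge_in_edge_cut_iff:
  assumes "X \<union> Y = gp_vertices n" "X \<inter> Y = {}" "i < n"
  shows "gp_edge n k (c, i) \<in> edge_cut (gp_edges n k) X Y \<longleftrightarrow> (case c of
      Outer \<Rightarrow> ((False, i) \<in> X \<longleftrightarrow> (False, (i + 1) mod n) \<notin> X)
    | Spoke \<Rightarrow> ((False, i) \<in> X \<longleftrightarrow> (True, i) \<notin> X)
    | Inner \<Rightarrow> ((True, i) \<in> X \<longleftrightarrow> (True, (i + k) mod n) \<notin> X))"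
proof -
  have edge: "gp_edge n k (c, i) \<in> gp_edges n k" using assms(3) by (rule gp_edge_in_gp_edges)
  then have "gp_edge n k (c, i) \<subseteq> X \<union> Y" using assms(1) by (simp add: gp_edges_subset_vertices)
  with edge show ?thesis
    by (cases c) (simp_all add: gp_edge_simps edge_cut_doubleton_iff[OF _ _ _ assms(2)])
qed

lemma card_edge_cut_gp_le:
  assumes "X \<union> Y = gp_vertices n" "X \<inter> Y = {}"
    and "induced_connected (gp_edges n k) X" "induced_connected (gp_edges n k) Y"
  shows "card (edge_cut (gp_edges n k) X Y) \<le> n + 2"
proof -
  have "finite X" "finite Y" using assms(1) finite_gp_vertices by (metis finite_Un)+
  moreover have "card X + card Y = 2 * n"
    using card_Un_disjoint[OF calculation assms(2)] assms(1) by (simp add: card_gp_vertices)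
  ultimately show ?thesis
    using card_edge_cut_le[OF finite_gp_edges empty_notin_gp_edges _ _ assms(2-4)]
      card_gp_edges_le[of n k] by fastforce
qed

lemma three_le_card_edge_cut_of_indices:
  assumes "0 < k" "2 * k < n" and "gp_edge n k ` {p1, p2, p3} \<subseteq> edge_cut (gp_edges n k) X Y"
    and "{p1, p2, p3} \<subseteq> UNIV \<times> {0..<n}" "p1 \<noteq> p2" "p1 \<noteq> p3" "p2 \<noteq> p3"
  shows "3 \<le> card (edge_cut (gp_edges n k) X Y)"
proof -
  have "inj_on (gp_edge n k) {p1, p2, p3}"
    using inj_on_subset[OF inj_on_gp_edge[OF assms(1,2)] assms(4)] .
  then have "card (gp_edge n k ` {p1, p2, p3}) = 3"
    using assms(5-7) by (simp add: card_image)
  moreover have "finite (edge_cut (gp_edges n k) X Y)"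
    using finite_gp_edges by (simp add: edge_cut_def)
  ultimately show ?thesis using card_mono assms(3) by metis
qed

text \<open>If the whole outer cycle lies in X, then any inner vertex y_j in Y contributes three cut
  edges: for each neighbour of y_j either the edge to it is cut, or the neighbour is an inner
  vertex in Y whose spoke is cut.\<close>

lemma three_le_card_edge_cut_outer_inside:
  assumes "0 < k" "2 * k < n" and XY: "X \<union> Y = gp_vertices n" "X \<inter> Y = {}" and "Y \<noteq> {}"
    and outer: "\<forall>i<n. (False, i) \<in> X"
  shows "3 \<le> card (edge_cut (gp_edges n k) X Y)"
proof -
  let ?B = "edge_cut (gp_edges n k) X Y"
  obtain v where "v \<in> Y" using \<open>Y \<noteq> {}\<close> by blast
  then have "v \<in> gp_vertices n" using XY(1) by blast
  then obtain b j where v: "v = (b, j)" and j: "j < n"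
    by (cases v) (auto simp: gp_vertices_def)
  have "b" using \<open>v \<in> Y\<close> outer XY(2) j v by (cases b) auto
  then have yj: "(True, j) \<notin> X" using \<open>v \<in> Y\<close> XY(2) v by auto
  define p where "p = (j + k) mod n"
  define q where "q = (j + (n - k)) mod n"
  have "p < n" "q < n" using j by (simp_all add: p_def q_def)
  have qp: "(q + k) mod n = j"
    unfolding q_def by (rule mod_add_diff_add_cancel) (use assms(2) j in simp_all)
  have "p \<noteq> j" unfolding p_def by (rule mod_add_ne_self) (use assms(1,2) j in simp_all)
  have "q \<noteq> j" unfolding q_def by (rule mod_add_ne_self) (use assms(1,2) j in simp_all)
  have "p \<noteq> q" using mod_add_mod_add_ne_self[OF assms(1,2) \<open>q < n\<close>] by (simp add: qp p_def)
  note cut_iff = gp_edge_in_edge_cut_iff[OF XY, where k = k]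
  define e1 where "e1 = (if (True, p) \<in> X then (Inner, j) else (Spoke, p))"
  define e2 where "e2 = (if (True, q) \<in> X then (Inner, q) else (Spoke, q))"
  have "gp_edge n k (Spoke, j) \<in> ?B" using cut_iff[OF j] outer j yj by simp
  moreover have "gp_edge n k e1 \<in> ?B"
    using cut_iff[OF j] cut_iff[OF \<open>p < n\<close>] outer \<open>p < n\<close> yj
    by (simp add: e1_def p_def[symmetric])
  moreover have "gp_edge n k e2 \<in> ?B"
    using cut_iff[OF \<open>q < n\<close>] outer \<open>q < n\<close> yj by (simp add: e2_def qp)
  ultimately have "gp_edge n k ` {(Spoke, j), e1, e2} \<subseteq> ?B" by simp
  moreover have "{(Spoke, j), e1, e2} \<subseteq> UNIV \<times> {0..<n}"
    using j \<open>p < n\<close> \<open>q < n\<close> by (simp add: e1_def e2_def)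
  moreover have "(Spoke, j) \<noteq> e1" "(Spoke, j) \<noteq> e2" "e1 \<noteq> e2"
    using \<open>p \<noteq> j\<close> \<open>q \<noteq> j\<close> \<open>p \<noteq> q\<close> by (simp_all add: e1_def e2_def)
  ultimately show ?thesis by (rule three_le_card_edge_cut_of_indices[OF assms(1,2)])
qed

text \<open>If the outer cycle leaves X after x_i and enters it after x_j, the two outer edges there
  are cut. A third cut edge is found near x_(i-k): otherwise the spokes at i, i-k, i+1, i+1-k
  and the inner edges from i-k and i+1-k are all uncut, which forces x_(i-k) into X and
  x_(i+1-k) out of X, so the outer edge between them is cut.\<close>

lemma three_le_card_edge_cut_outer_split:
  assumes "0 < k" "2 * k < n" and XY: "X \<union> Y = gp_vertices n" "X \<inter> Y = {}"
    and i: "i < n" "(False, i) \<in> X" "(False, (i + 1) mod n) \<notin> X"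
    and j: "j < n" "(False, j) \<notin> X" "(False, (j + 1) mod n) \<in> X"
  shows "3 \<le> card (edge_cut (gp_edges n k) X Y)"
proof -
  let ?B = "edge_cut (gp_edges n k) X Y"
  define i' where "i' = (i + (n - k)) mod n"
  define i1 where "i1 = (i + 1) mod n"
  define i1' where "i1' = (i1 + (n - k)) mod n"
  have lt: "i' < n" "i1 < n" "i1' < n" using i(1) by (simp_all add: i'_def i1_def i1'_def)
  have i'_k: "(i' + k) mod n = i"
    unfolding i'_def by (rule mod_add_diff_add_cancel) (use assms(2) i(1) in simp_all)
  have i1'_k: "(i1' + k) mod n = i1"
    unfolding i1'_def by (rule mod_add_diff_add_cancel) (use assms(2) lt(2) in simp_all)
  have "(i' + 1) mod n = (i + (n - k) + 1) mod n" unfolding i'_def by (rule mod_add_left_eq)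
  also have "\<dots> = (i + 1 + (n - k)) mod n" by (simp add: ac_simps)
  also have "\<dots> = i1'" unfolding i1'_def i1_def by (rule mod_add_left_eq[symmetric])
  finally have i'_1: "(i' + 1) mod n = i1'" .
  have "i' \<noteq> i" unfolding i'_def by (rule mod_add_ne_self) (use assms(1,2) i(1) in simp_all)
  have "i \<noteq> j" using i j by auto
  note cut_iff = gp_edge_in_edge_cut_iff[OF XY, where k = k]
  have outer_i: "gp_edge n k (Outer, i) \<in> ?B" using cut_iff[OF i(1)] i by simp
  have outer_j: "gp_edge n k (Outer, j) \<in> ?B" using cut_iff[OF j(1)] j by simp
  let ?S = "{(Spoke, i), (Spoke, i1), (Spoke, i'), (Spoke, i1'), (Inner, i'), (Inner, i1')}"
  show ?thesis
  proof (cases "\<exists>e\<in>?S. gp_edge n k e \<in> ?B")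
    case True
    then obtain c l where "(c, l) \<in> ?S" and cut: "gp_edge n k (c, l) \<in> ?B" by blast
    then have "l < n" "c \<noteq> Outer" using lt i(1) by auto
    then show ?thesis
      using three_le_card_edge_cut_of_indices[OF assms(1,2), of "(Outer, i)" "(Outer, j)" "(c, l)"]
        outer_i outer_j cut i(1) j(1) \<open>i \<noteq> j\<close> by auto
  next
    case False
    then have uncut: "\<And>c l. (c, l) \<in> ?S \<Longrightarrow> gp_edge n k (c, l) \<notin> ?B" by blast
    have "(True, i) \<in> X" using uncut[of Spoke i] cut_iff[OF i(1)] i by simp
    then have "(True, i') \<in> X" using uncut[of Inner i'] cut_iff[OF lt(1)] i'_k by simp
    then have "(False, i') \<in> X" using uncut[of Spoke i'] cut_iff[OF lt(1)] by simp
    have "(True, i1) \<notin> X" using uncut[of Spoke i1] cut_iff[OF lt(2)] i(3) by (simp add: i1_def)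
    then have "(True, i1') \<notin> X" using uncut[of Inner i1'] cut_iff[OF lt(3)] i1'_k by simp
    then have "(False, i1') \<notin> X" using uncut[of Spoke i1'] cut_iff[OF lt(3)] by simp
    then have "gp_edge n k (Outer, i') \<in> ?B"
      using cut_iff[OF lt(1)] \<open>(False, i') \<in> X\<close> i'_1 by simp
    moreover have "i' \<noteq> j" using \<open>(False, i') \<in> X\<close> j(2) by auto
    ultimately show ?thesis
      using three_le_card_edge_cut_of_indices[OF assms(1,2), of "(Outer, i)" "(Outer, j)" "(Outer, i')"]
        outer_i outer_j i(1) j(1) lt(1) \<open>i \<noteq> j\<close> \<open>i' \<noteq> i\<close> by auto
  qed
qed

lemma three_le_card_edge_cut:
  assumes "0 < k" "2 * k < n" and XY: "X \<union> Y = gp_vertices n" "X \<inter> Y = {}"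
    and "X \<noteq> {}" "Y \<noteq> {}"
  shows "3 \<le> card (edge_cut (gp_edges n k) X Y)"
proof (cases "\<forall>i<n. (False, i) \<in> X")
  case True
  then show ?thesis by (rule three_le_card_edge_cut_outer_inside[OF assms(1-4,6)])
next
  case not_all_X: False
  show ?thesis
  proof (cases "\<forall>i<n. (False, i) \<in> Y")
    case True
    have "Y \<union> X = gp_vertices n" "Y \<inter> X = {}" using XY by auto
    then have "3 \<le> card (edge_cut (gp_edges n k) Y X)"
      using three_le_card_edge_cut_outer_inside[OF assms(1,2) _ _ assms(5) True] by blast
    then show ?thesis by (simp only: edge_cut_commute)
  next
    case False
    then obtain a where a: "a < n" "(False, a) \<notin> Y" by blast
    then have aX: "(False, a) \<in> X"
      using XY(1) by (metis UNIV_I UnE atLeastLessThan_iff gp_vertices_def mem_Sigma_iff zero_le)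
    obtain b where b: "b < n" "(False, b) \<notin> X" using not_all_X by blast
    obtain i where "i < n" "(False, i) \<in> X" "(False, (i + 1) mod n) \<notin> X"
      by (rule cyclic_change_point[of "\<lambda>i. (False, i) \<in> X" a b n]) (use a aX b in auto)
    moreover obtain j where "j < n" "(False, j) \<notin> X" "(False, (j + 1) mod n) \<in> X"
      by (rule cyclic_change_point[of "\<lambda>i. (False, i) \<notin> X" b a n]) (use a aX b in auto)
    ultimately show ?thesis by (rule three_le_card_edge_cut_outer_split[OF assms(1-4)])
  qed
qed

lemma gp_edges_outerI: "Suc l < n \<Longrightarrow> {(False, l), (False, Suc l)} \<in> gp_edges n k"
  using gp_edge_in_gp_edges[of l n k Outer] by (simp add: gp_edge_simps)

lemma gp_edges_spokeI: "l < n \<Longrightarrow> {(False, l), (True, l)} \<in> gp_edges n k"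
  using gp_edge_in_gp_edges[of l n k Spoke] by (simp add: gp_edge_simps)

lemma gp_edges_innerI: "l + k < n \<Longrightarrow> {(True, l), (True, l + k)} \<in> gp_edges n k"
  using gp_edge_in_gp_edges[of l n k Inner] by (simp add: gp_edge_simps)

definition gp_prefix_side :: "nat \<Rightarrow> nat \<Rightarrow> (bool \<times> nat) set" where
  "gp_prefix_side m j = {False} \<times> {0..<m} \<union> {True} \<times> {0..<j}"

lemma gp_vertices_diff_prefix_side:
  "m \<le> n \<Longrightarrow> j \<le> n \<Longrightarrow>
    gp_vertices n - gp_prefix_side m j = {False} \<times> {m..<n} \<union> {True} \<times> {j..<n}"
  by (auto simp: gp_vertices_def gp_prefix_side_def)

lemma induced_connected_prefix_side:
  assumes "0 < m" "m \<le> n" "j \<le> m"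
  shows "induced_connected (gp_edges n k) (gp_prefix_side m j)"
proof (rule induced_connectedI)
  let ?X = "gp_prefix_side m j" and ?R = "induced_adj (gp_edges n k) (gp_prefix_side m j)"
  show "(False, 0) \<in> ?X" using assms(1) by (simp add: gp_prefix_side_def)
  have outer: "((False, 0), (False, l)) \<in> ?R\<^sup>*" if "l < m" for l
    using that assms(2)
    by (intro chain_in_rtrancl[where f = "Pair False" and b = l])
      (auto simp: gp_prefix_side_def intro!: induced_adjI gp_edges_outerI)
  fix u assume "u \<in> ?X"
  then consider l where "u = (False, l)" "l < m" | l where "u = (True, l)" "l < j"
    by (auto simp: gp_prefix_side_def)
  then show "((False, 0), u) \<in> ?R\<^sup>*"
  proof cases
    case (2 l)
    then have "((False, l), (True, l)) \<in> ?R"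
      using assms by (auto simp: gp_prefix_side_def intro!: induced_adjI gp_edges_spokeI)
    then show ?thesis using outer[of l] 2 assms(3) by (simp add: rtrancl_into_rtrancl)
  qed (use outer in simp)
qed

text \<open>An inner vertex y_l with l < m reaches the outer vertices in Y by repeatedly following
  the inner edge to y_(l+k) until the index is at least m.\<close>

lemma induced_connected_suffix_side:
  assumes "0 < k" "m < n" "m + k \<le> n"
  shows "induced_connected (gp_edges n k) ({False} \<times> {m..<n} \<union> {True} \<times> {j..<n})"
proof (rule induced_connectedI)
  let ?Y = "{False} \<times> {m..<n} \<union> {True} \<times> {j..<n}"
  let ?R = "induced_adj (gp_edges n k) ?Y"
  show "(False, m) \<in> ?Y" using assms(2) by simp
  have outer: "((False, m), (False, l)) \<in> ?R\<^sup>*" if "m \<le> l" "l < n" for l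
    using that
    by (intro chain_in_rtrancl[where f = "Pair False" and b = l])
      (auto intro!: induced_adjI gp_edges_outerI)
  have inner: "((False, m), (True, l)) \<in> ?R\<^sup>*" if "j \<le> l" "l < n" for l
    using that
  proof (induction "n - l" arbitrary: l rule: less_induct)
    case less
    show ?case
    proof (cases "m \<le> l")
      case True
      then have "((False, l), (True, l)) \<in> ?R"
        using less.prems by (auto intro!: induced_adjI gp_edges_spokeI)
      then show ?thesis using outer[OF True less.prems(2)] by (simp add: rtrancl_into_rtrancl)
    next
      case False
      then have "l + k < n" using assms(3) by simp
      then have "((True, l + k), (True, l)) \<in> ?R"
        using less.prems by (auto simp: insert_commute intro!: induced_adjI gp_edges_innerI)
      moreover have "((False, m), (True, l + k)) \<in> ?R\<^sup>*"
        using less.hyps[of "l + k"] less.prems assms(1) \<open>l + k < n\<close> by simp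
      ultimately show ?thesis by (simp add: rtrancl_into_rtrancl)
    qed
  qed
  fix u assume "u \<in> ?Y"
  then show "((False, m), u) \<in> ?R\<^sup>*" using outer inner by auto
qed

lemma edge_cut_indices_prefix_side:
  assumes "0 < m" "m + k \<le> n" "m < n" "j \<le> k" "j \<le> m"
  defines "X \<equiv> gp_prefix_side m j"
  shows "{p \<in> UNIV \<times> {0..<n}. gp_edge n k p \<in> edge_cut (gp_edges n k) X (gp_vertices n - X)} =
    {Outer} \<times> {m - 1, n - 1} \<union> {Spoke} \<times> {j..<m} \<union> {Inner} \<times> ({0..<j} \<union> {n - k..<n - k + j})"
proof -
  have XY: "X \<union> (gp_vertices n - X) = gp_vertices n" "X \<inter> (gp_vertices n - X) = {}"
    using assms(3,5) by (auto simp: X_def gp_prefix_side_def gp_vertices_def)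
  have mem_X: "(False, l) \<in> X \<longleftrightarrow> l < m" "(True, l) \<in> X \<longleftrightarrow> l < j" for l
    by (simp_all add: X_def gp_prefix_side_def)
  have "gp_edge n k (c, l) \<in> edge_cut (gp_edges n k) X (gp_vertices n - X) \<longleftrightarrow>
      (c, l) \<in> {Outer} \<times> {m - 1, n - 1} \<union> {Spoke} \<times> {j..<m} \<union> {Inner} \<times> ({0..<j} \<union> {n - k..<n - k + j})"
    if "l < n" for c l
  proof (cases c)
    case Outer
    have "(l + 1) mod n = (if l + 1 < n then l + 1 else 0)"
      using that by (auto simp: le_mod_geq)
    then show ?thesis
      using gp_edge_in_edge_cut_iff[OF XY that, of k c] Outer that assms(1,3)
      by (auto simp: mem_X)
  next
    case Spoke
    then show ?thesis
      using gp_edge_in_edge_cut_iff[OF XY that, of k c] that assms(5) by (auto simp: mem_X)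
  next
    case Inner
    have "(l + k) mod n = (if l + k < n then l + k else l + k - n)"
      using that assms(2,3) by (auto simp: le_mod_geq)
    then show ?thesis
      using gp_edge_in_edge_cut_iff[OF XY that, of k c] Inner that assms(2,4,5) by (auto simp: mem_X)
  qed
  moreover have "j < n" "n - k + j \<le> n" using assms(3-5) by simp_all
  ultimately show ?thesis using assms(3) by fastforce
qed

lemma card_edge_cut_prefix_side:
  assumes "0 < k" "2 * k < n" "0 < m" "m + k \<le> n" "j \<le> k" "j \<le> m"
  defines "X \<equiv> gp_prefix_side m j"
  shows "card (edge_cut (gp_edges n k) X (gp_vertices n - X)) = m + j + 2"
proof -
  let ?B = "edge_cut (gp_edges n k) X (gp_vertices n - X)"
  let ?I = "{p \<in> UNIV \<times> {0..<n}. gp_edge n k p \<in> ?B}"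
  let ?O = "{Outer} \<times> {m - 1, n - 1}" and ?S = "{Spoke} \<times> {j..<m}"
    and ?N = "{Inner} \<times> ({0..<j} \<union> {n - k..<n - k + j})"
  have "?B \<subseteq> gp_edge n k ` (UNIV \<times> {0..<n})"
    by (auto simp: edge_cut_def gp_edges_eq_image[symmetric])
  then have "card ?B = card (gp_edge n k ` ?I)" by (intro arg_cong[where f = card]) blast
  also have "\<dots> = card ?I"
    by (rule card_image, rule inj_on_subset[OF inj_on_gp_edge[OF assms(1,2)]]) blast
  also have "\<dots> = card (?O \<union> ?S \<union> ?N)"
    using edge_cut_indices_prefix_side[of m k n j] assms by simp
  also have "\<dots> = card ?O + card ?S + card ?N"
  proof -
    have "finite ?O" "finite ?S" "finite ?N" "?O \<inter> ?S = {}" "(?O \<union> ?S) \<inter> ?N = {}" by auto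
    then show ?thesis by (metis card_Un_disjoint finite_UnI)
  qed
  finally have "card ?B = card ?O + card ?S + card ?N" .
  moreover have "card ?O = 2" "card ?S = m - j"
    using assms(1,3,4) by (simp_all add: card_cartesian_product)
  moreover have "card ?N = j + j"
    using assms(4,6) by (simp add: card_cartesian_product card_Un_disjoint)
  ultimately show ?thesis using assms(6) by simp
qed

lemma is_bond_prefix_side:
  assumes "0 < k" "0 < m" "m + k \<le> n" "j \<le> m"
  shows "is_bond (gp_vertices n) (gp_edges n k)
    (edge_cut (gp_edges n k) (gp_prefix_side m j) (gp_vertices n - gp_prefix_side m j))"
proof -
  let ?X = "gp_prefix_side m j"
  have "m < n" using assms(1,3) by simp
  have "?X \<subseteq> gp_vertices n" using \<open>m < n\<close> assms(4) by (auto simp: gp_prefix_side_def gp_vertices_def)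
  moreover have "(False, 0) \<in> ?X" using assms(2) by (simp add: gp_prefix_side_def)
  moreover have "(False, m) \<in> gp_vertices n - ?X" using \<open>m < n\<close> by (simp add: gp_prefix_side_def gp_vertices_def)
  moreover have "induced_connected (gp_edges n k) ?X"
    using assms(2,4) \<open>m < n\<close> by (simp add: induced_connected_prefix_side)
  moreover have "induced_connected (gp_edges n k) (gp_vertices n - ?X)"
    using induced_connected_suffix_side[OF assms(1) \<open>m < n\<close> assms(3)] assms(4) \<open>m < n\<close>
    by (simp add: gp_vertices_diff_prefix_side)
  ultimately show ?thesis
    unfolding is_bond_def by (intro exI[of _ ?X] exI[of _ "gp_vertices n - ?X"]) auto
qed

lemma co_spectrum_gp_subset:
  assumes "0 < k" "2 * k < n"
  shows "co_spectrum (gp_vertices n) (gp_edges n k) \<subseteq> {3..n + 2}"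
proof
  fix s assume "s \<in> co_spectrum (gp_vertices n) (gp_edges n k)"
  then obtain X Y where "s = card (edge_cut (gp_edges n k) X Y)"
    "X \<noteq> {}" "Y \<noteq> {}" "X \<union> Y = gp_vertices n" "X \<inter> Y = {}"
    "induced_connected (gp_edges n k) X" "induced_connected (gp_edges n k) Y"
    unfolding co_spectrum_def is_bond_def by blast
  then show "s \<in> {3..n + 2}"
    using three_le_card_edge_cut[OF assms] card_edge_cut_gp_le by simp
qed

lemma mem_co_spectrum_gp:
  assumes "0 < k" "2 * k < n" "3 \<le> s" "s \<le> n + 2"
  shows "s \<in> co_spectrum (gp_vertices n) (gp_edges n k)"
proof -
  obtain m j where mj: "0 < m" "m + k \<le> n" "j \<le> k" "j \<le> m" "s = m + j + 2"
  proof (cases "s - 2 + k \<le> n")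
    case True
    then show ?thesis using that[of "s - 2" 0] assms by simp
  next
    case False
    then show ?thesis using that[of "n - k" "s - 2 - (n - k)"] assms by simp
  qed
  then show ?thesis
    using is_bond_prefix_side[OF assms(1) mj(1,2,4)] card_edge_cut_prefix_side[OF assms(1,2) mj(1-4)]
    unfolding co_spectrum_def by (metis (mono_tags, lifting) mem_Collect_eq)
qed

theorem theorem1p6:
  fixes n k :: nat
  assumes "n \<ge> 3" and "1 \<le> k" and "2 * k < n"
  shows "co_spectrum (gp_vertices n) (gp_edges n k) = {3..n + 2}"
  \<comment> \<open>The hypothesis n \<ge> 3 is implied by the other two.\<close>
proof
  show "co_spectrum (gp_vertices n) (gp_edges n k) \<subseteq> {3..n + 2}"
    by (rule co_spectrum_gp_subset) (use assms(2,3) in simp_all)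
  show "{3..n + 2} \<subseteq> co_spectrum (gp_vertices n) (gp_edges n k)"
    using mem_co_spectrum_gp[of k n] assms(2,3) by (simp add: subset_iff)
qed

end
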